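(* Let $1\le k\le n-2$ and let $\Sigma=\mathbb{S}^k\times\mathbb{R}^{n-k}\subset\mathbb{R}^{n+1}$ be a self-shrinker. Let $P_1,P_2\subset\mathbb{R}^{n-k}$ be two orthogonal $(n-k-1)$-dimensional linear subspaces, which divide $\mathbb{R}^{n-k}$ into four open quarter-spaces $Q_1,\dots,Q_4$. Then each $\mathbb{S}^k\times Q_i\subset\Sigma$ is stable.
   Context: $\mathbb{S}^k$ is the round sphere of radius $\sqrt{2k}$ centered at the origin of $\mathbb{R}^{k+1}$. Stability operator: $Lf=\Delta f-\tfrac12\langle\vec x,\nabla f\rangle+(|A|^2+\tfrac12)f$. A region $\Omega$ is stable if there is a function $u$ with $Lu=0$ and $u>0$ on $\Omega$. *)

theory Defs
  imports "HOL-Analysis.Analysis"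
begin

text \<open>Ambient space R^(n+1) = 'a \<times> 'b with DIM('a) = k+1, DIM('b) = n-k.
  The cylinder is Sigma = sphere 0 R \<times> UNIV, R = sqrt(2k).\<close>

definition shr_k :: "'a::euclidean_space itself \<Rightarrow> nat" where
  "shr_k _ = DIM('a) - 1"

definition shr_radius :: "'a::euclidean_space itself \<Rightarrow> real" where
  "shr_radius t = sqrt (2 * real (shr_k t))"

text \<open>|A|^2 of S^k(R) \<times> R^(n-k): k principal curvatures equal to 1/R, the rest 0.\<close>
definition shr_Asq :: "'a::euclidean_space itself \<Rightarrow> real" where
  "shr_Asq t = real (shr_k t) * (1 / shr_radius t)^2"

definition cylinder :: "real \<Rightarrow> ('a::euclidean_space \<times> 'b::euclidean_space) set" where
  "cylinder R = sphere 0 R \<times> UNIV"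

text \<open>Nearest-point projection onto the cylinder (defined where fst p \<noteq> 0).\<close>
definition nproj :: "real \<Rightarrow> ('a::euclidean_space \<times> 'b::euclidean_space) \<Rightarrow> 'a \<times> 'b" where
  "nproj R p = ((R / norm (fst p)) *\<^sub>R fst p, snd p)"

definition egrad :: "('c::euclidean_space \<Rightarrow> real) \<Rightarrow> 'c \<Rightarrow> 'c" where
  "egrad f x = (\<Sum>b\<in>Basis. frechet_derivative f (at x) b *\<^sub>R b)"

definition partial :: "('c::euclidean_space \<Rightarrow> real) \<Rightarrow> 'c \<Rightarrow> 'c \<Rightarrow> real" where
  "partial f b x = frechet_derivative f (at x) b"

definition elap :: "('c::euclidean_space \<Rightarrow> real) \<Rightarrow> 'c \<Rightarrow> real" where
  "elap f x = (\<Sum>b\<in>Basis. partial (partial f b) b x)"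

definition C2_on :: "('c::euclidean_space \<Rightarrow> real) \<Rightarrow> 'c set \<Rightarrow> bool" where
  "C2_on f W \<longleftrightarrow> (\<forall>x\<in>W. f differentiable (at x)) \<and>
     (\<forall>b\<in>Basis. \<forall>x\<in>W. partial f b differentiable (at x)) \<and>
     (\<forall>b\<in>Basis. \<forall>c\<in>Basis. continuous_on W (partial (partial f b) c))"

text \<open>The intrinsic gradient / Laplace-Beltrami
  operator of u on the cylinder are computed as the Euclidean gradient / Laplacian of the
  extension of u that is constant along normal lines (u \<circ> nproj R).\<close>
definition stab_op :: "real \<Rightarrow> real \<Rightarrow> ('a::euclidean_space \<times> 'b::euclidean_space \<Rightarrow> real)
    \<Rightarrow> 'a \<times> 'b \<Rightarrow> real" where
  "stab_op R Asq u x = elap (u \<circ> nproj R) x - 1/2 * (x \<bullet> egrad (u \<circ> nproj R) x)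
     + (Asq + 1/2) * u x"

text \<open>A region Omega of the cylinder is stable if there is u, C^2 on Omega (i.e. its
  normal extension is C^2 on the open tube over Omega), with L u = 0 and u > 0 on Omega.\<close>
definition stable_region :: "real \<Rightarrow> real \<Rightarrow> ('a::euclidean_space \<times> 'b::euclidean_space) set \<Rightarrow> bool" where
  "stable_region R Asq \<Omega> \<longleftrightarrow> (\<exists>u. C2_on (u \<circ> nproj R) {p. fst p \<noteq> 0 \<and> nproj R p \<in> \<Omega>} \<and>
      (\<forall>x\<in>\<Omega>. stab_op R Asq u x = 0 \<and> u x > 0))"

end

theory Submission
  imports Defs
begin

text \<open>Let \<open>v\<^sub>1, v\<^sub>2\<close> be normal vectors of \<open>P\<^sub>1, P\<^sub>2\<close> and \<open>u(x, y) = (v\<^sub>1 \<bullet> y) (v\<^sub>2 \<bullet> y)\<close>, which is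
  constant along the normal lines of the cylinder. Since \<open>v\<^sub>1 \<bullet> v\<^sub>2 = 0\<close>, \<open>u\<close> is harmonic; being
  homogeneous of degree 2 it satisfies \<open>x \<bullet> \<nabla>u = 2u\<close>, so the drift term \<open>-u\<close> cancels the
  potential term \<open>(|A|\<^sup>2 + 1/2) u = u\<close> and \<open>L u = 0\<close>. On a quarter-space \<open>Q\<close> the function \<open>u\<close>
  does not vanish, so by connectedness it has constant sign there and \<open>\<pm>u\<close> is a positive
  Jacobi field on \<open>S\<^sup>k \<times> Q\<close>.\<close>

lemma has_derivative_inner_product_form:
  fixes w1 w2 :: "'c::euclidean_space"
  shows "((\<lambda>p. c * ((w1 \<bullet> p) * (w2 \<bullet> p))) has_derivative
          (\<lambda>h. c * ((w1 \<bullet> h) * (w2 \<bullet> x) + (w1 \<bullet> x) * (w2 \<bullet> h)))) (at x)"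
  by (auto intro!: derivative_eq_intros simp: algebra_simps)

lemma partial_inner_product_form:
  fixes w1 w2 :: "'c::euclidean_space"
  shows "partial (\<lambda>p. c * ((w1 \<bullet> p) * (w2 \<bullet> p))) b =
         (\<lambda>x. c * ((w1 \<bullet> b) * (w2 \<bullet> x) + (w1 \<bullet> x) * (w2 \<bullet> b)))"
  using frechet_derivative_at[OF has_derivative_inner_product_form, of c w1 w2]
  by (auto simp: partial_def fun_eq_iff)

lemma has_derivative_partial_inner_product_form:
  fixes w1 w2 :: "'c::euclidean_space"
  shows "((\<lambda>x. c * ((w1 \<bullet> b) * (w2 \<bullet> x) + (w1 \<bullet> x) * (w2 \<bullet> b))) has_derivative
          (\<lambda>h. c * ((w1 \<bullet> b) * (w2 \<bullet> h) + (w1 \<bullet> h) * (w2 \<bullet> b)))) (at x)"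
  by (auto intro!: derivative_eq_intros simp: algebra_simps)

lemma partial_partial_inner_product_form:
  fixes w1 w2 :: "'c::euclidean_space"
  shows "partial (partial (\<lambda>p. c * ((w1 \<bullet> p) * (w2 \<bullet> p))) b) d =
         (\<lambda>x. c * ((w1 \<bullet> b) * (w2 \<bullet> d) + (w1 \<bullet> d) * (w2 \<bullet> b)))"
  using frechet_derivative_at[OF has_derivative_partial_inner_product_form, of c w1 b w2]
  by (auto simp: partial_inner_product_form partial_def fun_eq_iff)

lemma C2_on_inner_product_form:
  fixes w1 w2 :: "'c::euclidean_space"
  shows "C2_on (\<lambda>p. c * ((w1 \<bullet> p) * (w2 \<bullet> p))) W"
  unfolding C2_on_def partial_partial_inner_product_form
  unfolding partial_inner_product_form
  using has_derivative_inner_product_form has_derivative_partial_inner_product_form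
  by (auto simp: differentiable_def) blast+

lemma elap_inner_product_form:
  fixes w1 w2 :: "'c::euclidean_space"
  shows "elap (\<lambda>p. c * ((w1 \<bullet> p) * (w2 \<bullet> p))) x = 2 * c * (w1 \<bullet> w2)"
proof -
  have "elap (\<lambda>p. c * ((w1 \<bullet> p) * (w2 \<bullet> p))) x
      = 2 * c * (\<Sum>b\<in>Basis. (w1 \<bullet> b) * (w2 \<bullet> b))"
    by (simp add: elap_def partial_partial_inner_product_form sum_distrib_left algebra_simps)
  then show ?thesis
    by (simp add: euclidean_inner[of w1 w2])
qed

lemma inner_egrad_inner_product_form:
  fixes w1 w2 :: "'c::euclidean_space"
  shows "x \<bullet> egrad (\<lambda>p. c * ((w1 \<bullet> p) * (w2 \<bullet> p))) x = 2 * (c * ((w1 \<bullet> x) * (w2 \<bullet> x)))"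
proof -
  have "egrad (\<lambda>p. c * ((w1 \<bullet> p) * (w2 \<bullet> p))) x
      = (c * (w2 \<bullet> x)) *\<^sub>R (\<Sum>b\<in>Basis. (w1 \<bullet> b) *\<^sub>R b)
        + (c * (w1 \<bullet> x)) *\<^sub>R (\<Sum>b\<in>Basis. (w2 \<bullet> b) *\<^sub>R b)"
    unfolding egrad_def frechet_derivative_at[OF has_derivative_inner_product_form, symmetric]
    by (simp add: scaleR_sum_right sum.distrib[symmetric] algebra_simps scaleR_add_left)
  also have "\<dots> = (c * (w2 \<bullet> x)) *\<^sub>R w1 + (c * (w1 \<bullet> x)) *\<^sub>R w2"
    by (simp add: euclidean_representation inner_commute[of _ w1] inner_commute[of _ w2])
  finally show ?thesis
    by (simp add: algebra_simps inner_commute)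
qed

lemma comp_nproj_fiberwise: "(\<lambda>p. f (snd p)) \<circ> nproj R = (\<lambda>p. f (snd p))"
  by (simp add: fun_eq_iff nproj_def)

lemma fiberwise_inner_product_form:
  fixes v1 v2 :: "'b::euclidean_space"
  shows "(\<lambda>p::'a::euclidean_space \<times> 'b. c * ((v1 \<bullet> snd p) * (v2 \<bullet> snd p)))
       = (\<lambda>p. c * (((0, v1) \<bullet> p) * ((0, v2) \<bullet> p)))"
  by (simp add: fun_eq_iff inner_Pair_0 inner_commute)

lemma stab_op_inner_product_form:
  fixes v1 v2 :: "'b::euclidean_space" and x :: "'a::euclidean_space \<times> 'b"
  shows "stab_op R Asq (\<lambda>p. c * ((v1 \<bullet> snd p) * (v2 \<bullet> snd p))) x
       = 2 * c * (v1 \<bullet> v2) + (Asq - 1/2) * (c * ((v1 \<bullet> snd x) * (v2 \<bullet> snd x)))"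
proof -
  have "(0::'a, v1) \<bullet> x * ((0, v2) \<bullet> x) = (v1 \<bullet> snd x) * (v2 \<bullet> snd x)"
    by (simp add: inner_Pair_0 inner_commute)
  then show ?thesis
    unfolding stab_op_def comp_nproj_fiberwise[of "\<lambda>y. c * ((v1 \<bullet> y) * (v2 \<bullet> y))"]
    unfolding fiberwise_inner_product_form elap_inner_product_form inner_egrad_inner_product_form
    by (simp add: algebra_simps)
qed

lemma shr_Asq_eq_half:
  assumes "DIM('a::euclidean_space) \<ge> 2"
  shows "shr_Asq TYPE('a) = 1/2"
  using assms by (simp add: shr_Asq_def shr_radius_def shr_k_def power_divide)

lemma connected_nonvanishing_same_sign:
  fixes f :: "'c::topological_space \<Rightarrow> real"
  assumes "connected S" "continuous_on S f" "\<forall>z\<in>S. f z \<noteq> 0" "x \<in> S" "y \<in> S"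
  shows "f x * f y > 0"
proof (rule ccontr)
  assume "\<not> f x * f y > 0"
  then have "min (f x) (f y) \<le> 0" "0 \<le> max (f x) (f y)"
    by (auto simp: not_less mult_le_0_iff)
  moreover have "connected (f ` S)"
    by (rule connected_continuous_image[OF assms(2,1)])
  ultimately have "0 \<in> f ` S"
    using assms(4,5) by (auto intro: connectedD_interval simp: min_def max_def split: if_splits)
  with assms(3) show False
    by auto
qed

lemma subspace_codim1_eq_hyperplane:
  fixes P :: "'b::euclidean_space set"
  assumes "subspace P" "dim P = DIM('b) - 1"
  obtains v where "v \<noteq> 0" "\<forall>p\<in>P. orthogonal v p" "P = {y. v \<bullet> y = 0}"
proof -
  have "dim P < DIM('b)"
    using assms(2) by (simp add: DIM_positive)
  then obtain v where v: "v \<noteq> 0" "\<And>y. y \<in> span P \<Longrightarrow> orthogonal v y"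
    using orthogonal_to_subspace_exists by blast
  then have orth: "\<forall>p\<in>P. orthogonal v p"
    using span_base by blast
  then have "P \<subseteq> {y. v \<bullet> y = 0}"
    by (auto simp: orthogonal_def)
  then have "P = {y. v \<bullet> y = 0}"
    using subspace_dim_equal[OF assms(1) subspace_hyperplane[of v]] dim_hyperplane[OF v(1)] assms(2)
    by auto
  with v(1) orth that show ?thesis
    by blast
qed

theorem proposition4p4:
  fixes P1 P2 :: "'b::euclidean_space set"
  assumes k_ge: "DIM('a::euclidean_space) \<ge> 2"
    and nk_ge: "DIM('b) \<ge> 2"
    and P1: "subspace P1" "dim P1 = DIM('b) - 1"
    and P2: "subspace P2" "dim P2 = DIM('b) - 1"
    and orth: "\<forall>v w. (\<forall>p\<in>P1. orthogonal v p) \<longrightarrow> (\<forall>q\<in>P2. orthogonal w q) \<longrightarrow> orthogonal v w"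
    and Q: "Q \<in> components (- (P1 \<union> P2))"
  shows "stable_region (shr_radius TYPE('a)) (shr_Asq TYPE('a))
           ((sphere (0::'a) (shr_radius TYPE('a))) \<times> Q)"
proof -
  obtain v1 where v1: "\<forall>p\<in>P1. orthogonal v1 p" "P1 = {y. v1 \<bullet> y = 0}"
    using subspace_codim1_eq_hyperplane[OF P1] by blast
  obtain v2 where v2: "\<forall>p\<in>P2. orthogonal v2 p" "P2 = {y. v2 \<bullet> y = 0}"
    using subspace_codim1_eq_hyperplane[OF P2] by blast
  have "v1 \<bullet> v2 = 0"
    using orth v1(1) v2(1) by (auto simp: orthogonal_def)
  define g where "g y = (v1 \<bullet> y) * (v2 \<bullet> y)" for y
  have g_nonzero: "\<forall>y\<in>Q. g y \<noteq> 0"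
    using in_components_subset[OF Q] v1(2) v2(2) by (auto simp: g_def)
  obtain y0 where "y0 \<in> Q"
    using in_components_nonempty[OF Q] by blast
  have g_sign: "g y0 * g y > 0" if "y \<in> Q" for y
    using connected_nonvanishing_same_sign[OF in_components_connected[OF Q] _ g_nonzero \<open>y0 \<in> Q\<close> that]
    by (simp add: g_def continuous_intros)
  define u where "u = (\<lambda>p::'a \<times> 'b. g y0 * ((v1 \<bullet> snd p) * (v2 \<bullet> snd p)))"
  have "u \<circ> nproj R = u" for R
    unfolding u_def by (rule comp_nproj_fiberwise)
  then have "C2_on (u \<circ> nproj R) W" for R W
    using C2_on_inner_product_form by (simp add: u_def fiberwise_inner_product_form)
  moreover have "stab_op R (shr_Asq TYPE('a)) u x = 0" for R x
    unfolding shr_Asq_eq_half[OF k_ge] u_def stab_op_inner_product_form \<open>v1 \<bullet> v2 = 0\<close>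
    by simp
  moreover have "u x > 0" if "x \<in> sphere 0 (shr_radius TYPE('a)) \<times> Q" for x
    using g_sign that by (auto simp: u_def g_def)
  ultimately show ?thesis
    unfolding stable_region_def by blast
qed

end
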